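(* Let $y$ be an optimal (minimum-cost feasible) solution, $S$ an active set for $y$, and $i\in S$. If $y_i<x_i$, then any two distinct $j,j'\in\widetilde\gamma(i)$ with $y_j>x_i$ and $y_{j'}>x_i$ do not overlap, i.e. $|y_j-y_{j'}|\ge r_j+r_{j'}$. Symmetrically, if $y_i>x_i$, then any two distinct $j,j'\in\widetilde\gamma(i)$ with $y_j<x_i$ and $y_{j'}<x_i$ satisfy $|y_j-y_{j'}|\ge r_j+r_{j'}$.
   Context: Barrier coverage problem: sensors $i=1,\dots,n$ with locations $x_i\in\mathbb{R}$ and radii $r_i>0$, indexed so that $x_1\le\cdots\le x_n$; a solution $y\in\mathbb{R}^n$ places sensor $i$ to cover $[y_i-r_i,y_i+r_i]$; it is feasible if these intervals cover $[0,L]$; its cost is $\sum_i|y_i-x_i|$; an optimal solution is a feasible solution of minimum cost. A set $S$ is active for $y$ if $\bigcup_{i\in S}[y_i-r_i,y_i+r_i]\supseteq[0,L]$. For $i\in S$, $\gamma(i)$ is the set of $j\in S$ with ($i<j$ and $y_i>y_j$) or ($i>j$ and $y_i<y_j$); and $\widetilde\gamma(i)=\{j\in\gamma(i): |x_j-y_j|\le|x_i-y_i|\}$. *)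

theory Defs
  imports Complex_Main
begin

text \<open>Barrier coverage. Sensors are indexed by 1..n; locations x, radii r, placements y
  are functions nat => real (only values on 1..n matter).\<close>

definition covers :: "nat set \<Rightarrow> (nat \<Rightarrow> real) \<Rightarrow> (nat \<Rightarrow> real) \<Rightarrow> real \<Rightarrow> bool" where
  "covers S r y L \<longleftrightarrow> {0..L} \<subseteq> (\<Union>i\<in>S. {y i - r i .. y i + r i})"

definition feasible :: "nat \<Rightarrow> (nat \<Rightarrow> real) \<Rightarrow> real \<Rightarrow> (nat \<Rightarrow> real) \<Rightarrow> bool" where
  "feasible n r L y \<longleftrightarrow> covers {1..n} r y L"

definition cost :: "nat \<Rightarrow> (nat \<Rightarrow> real) \<Rightarrow> (nat \<Rightarrow> real) \<Rightarrow> real" where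
  "cost n x y = (\<Sum>i=1..n. \<bar>y i - x i\<bar>)"

definition optimal :: "nat \<Rightarrow> (nat \<Rightarrow> real) \<Rightarrow> (nat \<Rightarrow> real) \<Rightarrow> real \<Rightarrow> (nat \<Rightarrow> real) \<Rightarrow> bool" where
  "optimal n x r L y \<longleftrightarrow> feasible n r L y \<and>
     (\<forall>z. feasible n r L z \<longrightarrow> cost n x y \<le> cost n x z)"

definition active :: "nat \<Rightarrow> (nat \<Rightarrow> real) \<Rightarrow> real \<Rightarrow> (nat \<Rightarrow> real) \<Rightarrow> nat set \<Rightarrow> bool" where
  "active n r L y S \<longleftrightarrow> S \<subseteq> {1..n} \<and> covers S r y L"

definition gamma :: "nat set \<Rightarrow> (nat \<Rightarrow> real) \<Rightarrow> nat \<Rightarrow> nat set" where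
  "gamma S y i = {j \<in> S. (i < j \<and> y i > y j) \<or> (i > j \<and> y i < y j)}"

definition gamma_tilde :: "nat set \<Rightarrow> (nat \<Rightarrow> real) \<Rightarrow> (nat \<Rightarrow> real) \<Rightarrow> nat \<Rightarrow> nat set" where
  "gamma_tilde S x y i = {j \<in> gamma S y i. \<bar>x j - y j\<bar> \<le> \<bar>x i - y i\<bar>}"

end

theory Submission
  imports Defs
begin

text \<open>In an optimal solution two distinct sensors displaced in the same direction cannot
  overlap: of two overlapping intervals, the one that does not reach further in the direction
  of displacement can be moved slightly back towards its origin, since the part it gives up is
  covered by the other one; this keeps feasibility and lowers the cost. If \<open>y\<^sub>i < x\<^sub>i\<close> and
  \<open>j \<in> \<gamma>(i)\<close> with \<open>y\<^sub>j > x\<^sub>i > y\<^sub>i\<close>, then \<open>j < i\<close>, so \<open>x\<^sub>j \<le> x\<^sub>i < y\<^sub>j\<close>: all such \<open>j\<close> are displaced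
  to the right, and the claim follows; the case \<open>y\<^sub>i > x\<^sub>i\<close> is symmetric.\<close>

lemma cost_fun_upd:
  assumes "k \<in> {1..n}"
  shows "cost n x (y(k := v)) = cost n x y - \<bar>y k - x k\<bar> + \<bar>v - x k\<bar>"
proof -
  have rest: "(\<Sum>i\<in>{1..n} - {k}. \<bar>(y(k := v)) i - x i\<bar>) = (\<Sum>i\<in>{1..n} - {k}. \<bar>y i - x i\<bar>)"
    by (rule sum.cong) auto
  show ?thesis
    using sum.remove[OF finite_atLeastAtMost assms, of "\<lambda>i. \<bar>(y(k := v)) i - x i\<bar>"]
      sum.remove[OF finite_atLeastAtMost assms, of "\<lambda>i. \<bar>y i - x i\<bar>"] rest
    unfolding cost_def by simp
qed

lemma feasible_fun_upd:
  assumes feas: "feasible n r L y" and k: "k \<in> {1..n}" and m: "m \<in> {1..n}" "m \<noteq> k"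
    and lost: "\<And>p. \<bar>p - y k\<bar> \<le> r k \<Longrightarrow> \<bar>p - v\<bar> > r k \<Longrightarrow> \<bar>p - y m\<bar> \<le> r m"
  shows "feasible n r L (y(k := v))"
  unfolding feasible_def covers_def
proof
  fix p assume "p \<in> {0..L}"
  then obtain l where l: "l \<in> {1..n}" "\<bar>p - y l\<bar> \<le> r l"
    using feas unfolding feasible_def covers_def by (force simp: abs_le_iff)
  have "\<exists>l\<in>{1..n}. p \<in> {(y(k := v)) l - r l .. (y(k := v)) l + r l}"
  proof (cases "l = k")
    case True
    then show ?thesis
      using k m lost[of p] l by (cases "\<bar>p - v\<bar> \<le> r k") (force simp: abs_le_iff)+
  qed (use l in \<open>force simp: abs_le_iff\<close>)
  then show "p \<in> (\<Union>l\<in>{1..n}. {(y(k := v)) l - r l .. (y(k := v)) l + r l})"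
    by blast
qed

lemma optimal_no_covered_improvement:
  assumes opt: "optimal n x r L y" and k: "k \<in> {1..n}" and m: "m \<in> {1..n}" "m \<noteq> k"
    and lost: "\<And>p. \<bar>p - y k\<bar> \<le> r k \<Longrightarrow> \<bar>p - v\<bar> > r k \<Longrightarrow> \<bar>p - y m\<bar> \<le> r m"
    and cheaper: "\<bar>v - x k\<bar> < \<bar>y k - x k\<bar>"
  shows False
proof -
  have "feasible n r L (y(k := v))"
    using opt feasible_fun_upd[OF _ k m] lost unfolding optimal_def by blast
  then have "cost n x y \<le> cost n x (y(k := v))"
    using opt unfolding optimal_def by blast
  then show False
    using cost_fun_upd[OF k, of x y v] cheaper by simp
qed

lemma optimal_right_shifted_not_overlapped:
  assumes opt: "optimal n x r L y" and ab: "a \<in> {1..n}" "b \<in> {1..n}" "a \<noteq> b"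
    and shifted: "x a < y a"
    and overlap: "y b - r b < y a + r a" and inside: "y a + r a \<le> y b + r b"
  shows False
proof -
  define e where "e = min (y a + r a - (y b - r b)) (y a - x a)"
  have e: "0 < e" "e \<le> y a + r a - (y b - r b)" "e \<le> y a - x a"
    using overlap shifted by (auto simp: e_def)
  show False
  proof (rule optimal_no_covered_improvement[OF opt ab(1,2) ab(3)[symmetric], of "y a - e"])
    fix p assume "\<bar>p - y a\<bar> \<le> r a" "r a < \<bar>p - (y a - e)\<bar>"
    then show "\<bar>p - y b\<bar> \<le> r b"
      using e inside by (auto simp: abs_le_iff abs_less_iff)
  qed (use e in auto)
qed

lemma optimal_left_shifted_not_overlapped:
  assumes opt: "optimal n x r L y" and ab: "a \<in> {1..n}" "b \<in> {1..n}" "a \<noteq> b"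
    and shifted: "y a < x a"
    and overlap: "y a - r a < y b + r b" and inside: "y b - r b \<le> y a - r a"
  shows False
proof -
  define e where "e = min (y b + r b - (y a - r a)) (x a - y a)"
  have e: "0 < e" "e \<le> y b + r b - (y a - r a)" "e \<le> x a - y a"
    using overlap shifted by (auto simp: e_def)
  show False
  proof (rule optimal_no_covered_improvement[OF opt ab(1,2) ab(3)[symmetric], of "y a + e"])
    fix p assume "\<bar>p - y a\<bar> \<le> r a" "r a < \<bar>p - (y a + e)\<bar>"
    then show "\<bar>p - y b\<bar> \<le> r b"
      using e inside by (auto simp: abs_le_iff abs_less_iff)
  qed (use e in auto)
qed

lemma optimal_right_shifted_disjoint:
  assumes opt: "optimal n x r L y" and ab: "a \<in> {1..n}" "b \<in> {1..n}" "a \<noteq> b"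
    and "x a < y a" "x b < y b"
  shows "r a + r b \<le> \<bar>y a - y b\<bar>"
proof (rule ccontr)
  assume "\<not> ?thesis"
  then have "y b - r b < y a + r a" "y a - r a < y b + r b" by auto
  then show False
    using optimal_right_shifted_not_overlapped[OF opt ab] assms(5)
      optimal_right_shifted_not_overlapped[OF opt ab(2,1) ab(3)[symmetric]] assms(6)
    by (cases "y a + r a \<le> y b + r b") auto
qed

lemma optimal_left_shifted_disjoint:
  assumes opt: "optimal n x r L y" and ab: "a \<in> {1..n}" "b \<in> {1..n}" "a \<noteq> b"
    and "y a < x a" "y b < x b"
  shows "r a + r b \<le> \<bar>y a - y b\<bar>"
proof (rule ccontr)
  assume "\<not> ?thesis"
  then have "y b - r b < y a + r a" "y a - r a < y b + r b" by auto
  then show False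
    using optimal_left_shifted_not_overlapped[OF opt ab] assms(5)
      optimal_left_shifted_not_overlapped[OF opt ab(2,1) ab(3)[symmetric]] assms(6)
    by (cases "y b - r b \<le> y a - r a") auto
qed

theorem mainTheorem6:
  fixes n :: nat and x r y :: "nat \<Rightarrow> real" and L :: real and S :: "nat set" and i :: nat
  assumes sorted: "\<And>a b. 1 \<le> a \<Longrightarrow> a \<le> b \<Longrightarrow> b \<le> n \<Longrightarrow> x a \<le> x b"
    and rpos: "\<And>a. 1 \<le> a \<Longrightarrow> a \<le> n \<Longrightarrow> r a > 0"
    and opt: "optimal n x r L y"
    and act: "active n r L y S"
    and iS: "i \<in> S"
  shows "(y i < x i \<longrightarrow>
            (\<forall>j\<in>gamma_tilde S x y i. \<forall>j'\<in>gamma_tilde S x y i.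
               j \<noteq> j' \<and> y j > x i \<and> y j' > x i \<longrightarrow> \<bar>y j - y j'\<bar> \<ge> r j + r j'))
       \<and> (y i > x i \<longrightarrow>
            (\<forall>j\<in>gamma_tilde S x y i. \<forall>j'\<in>gamma_tilde S x y i.
               j \<noteq> j' \<and> y j < x i \<and> y j' < x i \<longrightarrow> \<bar>y j - y j'\<bar> \<ge> r j + r j'))"
proof -
  have S: "S \<subseteq> {1..n}" using act unfolding active_def by blast
  with iS have i: "i \<in> {1..n}" by blast
  have gamma_range: "gamma_tilde S x y i \<subseteq> {1..n}"
    using S unfolding gamma_tilde_def gamma_def by auto
  have right: "x j < y j" if "y i < x i" "j \<in> gamma_tilde S x y i" "x i < y j" for j
  proof -
    have "j \<in> S" "j < i" using that unfolding gamma_tilde_def gamma_def by auto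
    then have "x j \<le> x i" using sorted[of j i] S i by force
    with that show ?thesis by simp
  qed
  have left: "y j < x j" if "x i < y i" "j \<in> gamma_tilde S x y i" "y j < x i" for j
  proof -
    have "j \<in> S" "i < j" using that unfolding gamma_tilde_def gamma_def by auto
    then have "x i \<le> x j" using sorted[of i j] S i by force
    with that show ?thesis by simp
  qed
  show ?thesis
    using optimal_right_shifted_disjoint[OF opt] optimal_left_shifted_disjoint[OF opt]
      right left gamma_range by (meson subsetD)
qed

end
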